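(* Let $c_0,c_1$ be real constants with $c_0\ge\max\{c_1,-3c_1\}$, let $M\ge2$, and let $\{v_j\}_{j=0}^{M}$ be any real sequence. Put $$A=\frac12\sqrt{\frac{c_0-c_1}{2}}+\frac12\sqrt{\frac{c_0+3c_1}{2}},\qquad B=\sqrt{\frac{c_0-c_1}{2}},\qquad E_j=A^2v_j^2+\left(Bv_j-Av_{j-1}\right)^2,\ j=1,\dots,M.$$ Then for every $j=1,\dots,M-1$, $$v_{j+1}\left(c_0v_{j+1}-(c_0-c_1)v_j-c_1v_{j-1}\right)\ge E_{j+1}-E_j.$$ *)

theory Defs
  imports Complex_Main
begin

end

theory Submission
  imports Defs
begin

text \<open>With \<open>p = sqrt ((c0 - c1) / 2)\<close> and \<open>q = sqrt ((c0 + 3 c1) / 2)\<close> one has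
  \<open>A = (p + q) / 2\<close> and \<open>B = p\<close>, and the gap between the two sides of the inequality
  is exactly the perfect square \<open>((p - q) / 2 \<cdot> v (j+1) - p \<cdot> v j + (p + q) / 2 \<cdot> v (j-1))\<^sup>2\<close>.
  This is an identity in the three values alone, so the range of \<open>j\<close> and the bound on \<open>M\<close>
  play no role.\<close>

lemma energy_gap_eq_square:
  fixes c0 c1 p q x y z :: real
  assumes "c0 - c1 = 2 * p\<^sup>2" and "c0 + 3 * c1 = 2 * q\<^sup>2"
  defines "A \<equiv> (p + q) / 2"
  shows "x * (c0 * x - (c0 - c1) * y - c1 * z)
           - ((A\<^sup>2 * x\<^sup>2 + (p * x - A * y)\<^sup>2) - (A\<^sup>2 * y\<^sup>2 + (p * y - A * z)\<^sup>2))
         = ((p - q) / 2 * x - p * y + A * z)\<^sup>2"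
proof -
  have c0: "c0 = (3 * p\<^sup>2 + q\<^sup>2) / 2" and c1: "c1 = (q\<^sup>2 - p\<^sup>2) / 2"
    using assms(1,2) by simp_all
  show ?thesis
    unfolding A_def c0 c1 by (simp add: power2_eq_square algebra_simps divide_simps)
qed

lemma energy_increment_le:
  fixes c0 c1 x y z :: real
  assumes "c0 \<ge> max c1 (- 3 * c1)"
  defines "A \<equiv> sqrt ((c0 - c1) / 2) / 2 + sqrt ((c0 + 3 * c1) / 2) / 2"
    and "B \<equiv> sqrt ((c0 - c1) / 2)"
  shows "(A\<^sup>2 * x\<^sup>2 + (B * x - A * y)\<^sup>2) - (A\<^sup>2 * y\<^sup>2 + (B * y - A * z)\<^sup>2)
           \<le> x * (c0 * x - (c0 - c1) * y - c1 * z)"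
proof -
  define p where "p = sqrt ((c0 - c1) / 2)"
  define q where "q = sqrt ((c0 + 3 * c1) / 2)"
  have p: "c0 - c1 = 2 * p\<^sup>2" and q: "c0 + 3 * c1 = 2 * q\<^sup>2"
    unfolding p_def q_def using assms(1) by simp_all
  have A: "A = (p + q) / 2" and B: "B = p"
    unfolding A_def B_def p_def q_def by simp_all
  have "x * (c0 * x - (c0 - c1) * y - c1 * z)
      - ((A\<^sup>2 * x\<^sup>2 + (B * x - A * y)\<^sup>2) - (A\<^sup>2 * y\<^sup>2 + (B * y - A * z)\<^sup>2))
    = ((p - q) / 2 * x - p * y + A * z)\<^sup>2"
    unfolding A B using energy_gap_eq_square[OF p q] .
  then show ?thesis
    by (metis diff_ge_0_iff_ge zero_le_power2)
qed

theorem lemma4: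
  fixes c0 c1 :: real and M :: nat and v :: "nat \<Rightarrow> real" and A B :: real
    and E :: "nat \<Rightarrow> real"
  assumes "c0 \<ge> max c1 (- 3 * c1)"
    and "M \<ge> 2"
  defines "A \<equiv> sqrt ((c0 - c1) / 2) / 2 + sqrt ((c0 + 3 * c1) / 2) / 2"
    and "B \<equiv> sqrt ((c0 - c1) / 2)"
    and "E \<equiv> (\<lambda>j. A\<^sup>2 * (v j)\<^sup>2 + (B * v j - A * v (j - 1))\<^sup>2)"
  shows "\<forall>j\<in>{1..M-1}. v (j + 1) * (c0 * v (j + 1) - (c0 - c1) * v j - c1 * v (j - 1))
           \<ge> E (j + 1) - E j"
proof
  fix j
  show "v (j + 1) * (c0 * v (j + 1) - (c0 - c1) * v j - c1 * v (j - 1)) \<ge> E (j + 1) - E j"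
    using energy_increment_le[OF assms(1), of "v (j + 1)" "v j" "v (j - 1)"]
    unfolding E_def A_def B_def by simp
qed

end
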